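(* Let $k\ge0$ and let $A$ be a real symmetric positive semidefinite matrix indexed by $\mathcal{F}'_k$ such that $A_{F_1,G_1}=A_{F_2,G_2}$ whenever $F_1G_1\simeq F_2G_2$. Then every entry of $A$ lies in the interval $[0,A_{U_k,U_k}]$, where $U_k$ is the edgeless graph on $[k]$.
   Context: $\mathcal{F}'_k$ denotes the set of flat $k$-labeled graphs, i.e. graphs on node set $[k]$ with all nodes labeled $1,\dots,k$. For $F,G\in\mathcal{F}'_k$, $FG$ is the graph on $[k]$ with edge set $E(F)\cup E(G)$. For graphs $F,G$, $F\simeq G$ means they become isomorphic after deleting their isolated nodes. *)

theory Defs
  imports Complex_Main
begin

text \<open>A simple graph on node set [k] = {1..k} is represented by its edge set:
  a set of 2-element subsets of {1..k}.  All nodes 1..k are present (labeled),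
  so the node set is implicit.\<close>

definition flat_graphs :: "nat \<Rightarrow> nat set set set" where
  "flat_graphs k = {E. E \<subseteq> {{i, j} | i j. i \<in> {1..k} \<and> j \<in> {1..k} \<and> i \<noteq> j}}"

definition glue :: "nat set set \<Rightarrow> nat set set \<Rightarrow> nat set set" where
  "glue F G = F \<union> G"

text \<open>F \<simeq> G: isomorphic after deleting isolated nodes.  The non-isolated nodes
  of a graph with edge set E are exactly \<Union>E.\<close>
definition iso_noniso :: "nat set set \<Rightarrow> nat set set \<Rightarrow> bool" where
  "iso_noniso F G \<longleftrightarrow> (\<exists>f. bij_betw f (\<Union>F) (\<Union>G) \<and> (\<lambda>e. f ` e) ` F = G)"

definition edgeless :: "nat \<Rightarrow> nat set set" where
  "edgeless k = {}"

definition psd_on :: "'a set \<Rightarrow> ('a \<Rightarrow> 'a \<Rightarrow> real) \<Rightarrow> bool" where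
  "psd_on I A \<longleftrightarrow> (\<forall>F\<in>I. \<forall>G\<in>I. A F G = A G F) \<and>
     (\<forall>x :: 'a \<Rightarrow> real. (\<Sum>F\<in>I. \<Sum>G\<in>I. x F * A F G * x G) \<ge> 0)"

end

theory Submission
  imports Defs
begin

(* Put H = F G, the union of the edge sets.  Since F G, H H and H U_k all have
   the same edge set H, the invariance hypothesis gives A(F,G) = A(H,H) = A(H,U_k).
   Two general facts about symmetric positive semidefinite matrices then finish:
     - diagonal entries are nonnegative, so A(F,G) = A(H,H) >= 0;
     - 2 A(a,b) <= A(a,a) + A(b,b) (test vector e_a - e_b), which with
       A(H,U_k) = A(H,H) yields A(H,H) <= A(U_k,U_k). *)

lemma quadratic_form_support:
  fixes x :: "'a \<Rightarrow> real"
  assumes "finite I" "S \<subseteq> I" "\<And>a. a \<notin> S \<Longrightarrow> x a = 0"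
  shows "(\<Sum>a\<in>I. \<Sum>b\<in>I. x a * A a b * x b) = (\<Sum>a\<in>S. \<Sum>b\<in>S. x a * A a b * x b)"
proof -
  have "(\<Sum>a\<in>I. \<Sum>b\<in>I. x a * A a b * x b) = (\<Sum>a\<in>I. \<Sum>b\<in>S. x a * A a b * x b)"
    by (rule sum.cong[OF refl], rule sum.mono_neutral_right) (use assms in auto)
  also have "\<dots> = (\<Sum>a\<in>S. \<Sum>b\<in>S. x a * A a b * x b)"
    by (rule sum.mono_neutral_right) (use assms in auto)
  finally show ?thesis .
qed

text \<open>Diagonal entries of a PSD matrix are nonnegative (test vector e_a).\<close>
lemma psd_on_diag_nonneg:
  assumes psd: "psd_on I A" and "finite I" "a \<in> I"
  shows "0 \<le> A a a"
proof -
  define x :: "'a \<Rightarrow> real" where "x = (\<lambda>c. if c = a then 1 else 0)"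
  have "(\<Sum>c\<in>I. \<Sum>d\<in>I. x c * A c d * x d) = (\<Sum>c\<in>{a}. \<Sum>d\<in>{a}. x c * A c d * x d)"
    by (rule quadratic_form_support) (use assms in \<open>auto simp: x_def\<close>)
  also have "\<dots> = A a a" by (simp add: x_def)
  finally show ?thesis using psd unfolding psd_on_def by metis
qed

text \<open>Off-diagonal entries are bounded by the mean of the two diagonal entries
  (test vector e_a - e_b, together with symmetry).\<close>
lemma psd_on_two_point:
  assumes psd: "psd_on I A" and "finite I" "a \<in> I" "b \<in> I"
  shows "2 * A a b \<le> A a a + A b b"
proof (cases "a = b")
  case True
  then show ?thesis using psd_on_diag_nonneg[OF assms(1-3)] by simp
next
  case False
  define x :: "'a \<Rightarrow> real" where "x = (\<lambda>c. if c = a then 1 else if c = b then -1 else 0)"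
  have "(\<Sum>c\<in>I. \<Sum>d\<in>I. x c * A c d * x d) = (\<Sum>c\<in>{a,b}. \<Sum>d\<in>{a,b}. x c * A c d * x d)"
    by (rule quadratic_form_support) (use assms in \<open>auto simp: x_def\<close>)
  also have "\<dots> = A a a - A a b - A b a + A b b"
    using False by (simp add: x_def)
  finally have "0 \<le> A a a - A a b - A b a + A b b"
    using psd unfolding psd_on_def by metis
  moreover have "A b a = A a b" using psd assms(3,4) unfolding psd_on_def by blast
  ultimately show ?thesis by linarith
qed

lemma finite_flat_graphs: "finite (flat_graphs k)"
proof -
  have "{{i, j} | i j. i \<in> {1..k} \<and> j \<in> {1..k} \<and> i \<noteq> j}
          \<subseteq> (\<lambda>(i, j). {i, j}) ` ({1..k} \<times> {1..k})"
    by auto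
  then have "finite {{i, j} | i j. i \<in> {1..k} \<and> j \<in> {1..k} \<and> i \<noteq> j}"
    by (rule finite_subset) simp
  then show ?thesis unfolding flat_graphs_def by simp
qed

lemma glue_flat_graphs:
  "F \<in> flat_graphs k \<Longrightarrow> G \<in> flat_graphs k \<Longrightarrow> glue F G \<in> flat_graphs k"
  unfolding flat_graphs_def glue_def by auto

lemma edgeless_flat_graphs: "edgeless k \<in> flat_graphs k"
  unfolding flat_graphs_def edgeless_def by auto

lemma iso_noniso_refl: "iso_noniso X X"
  unfolding iso_noniso_def by (rule exI[of _ id]) auto

definition glue_invariant :: "nat \<Rightarrow> (nat set set \<Rightarrow> nat set set \<Rightarrow> real) \<Rightarrow> bool" where
  "glue_invariant k A \<longleftrightarrow>
     (\<forall>F1\<in>flat_graphs k. \<forall>G1\<in>flat_graphs k. \<forall>F2\<in>flat_graphs k. \<forall>G2\<in>flat_graphs k.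
        iso_noniso (glue F1 G1) (glue F2 G2) \<longrightarrow> A F1 G1 = A F2 G2)"

text \<open>For a glue-invariant matrix, A(F,G) = A(FG,FG) = A(FG,U_k), because the
  three products have the same edge set.\<close>
lemma glue_invariant_entries:
  assumes inv: "glue_invariant k A"
    and F: "F \<in> flat_graphs k" and G: "G \<in> flat_graphs k"
  shows "A F G = A (glue F G) (glue F G)" "A F G = A (glue F G) (edgeless k)"
proof -
  have H: "glue F G \<in> flat_graphs k" using F G by (rule glue_flat_graphs)
  have "glue (glue F G) (glue F G) = glue F G" "glue (glue F G) (edgeless k) = glue F G"
    by (auto simp: glue_def edgeless_def)
  then show "A F G = A (glue F G) (glue F G)" "A F G = A (glue F G) (edgeless k)"
    using inv F G H edgeless_flat_graphs iso_noniso_refl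
    unfolding glue_invariant_def by metis+
qed

theorem mainTheorem8:
  fixes k :: nat and A :: "nat set set \<Rightarrow> nat set set \<Rightarrow> real"
  assumes psd: "psd_on (flat_graphs k) A"
    and inv: "\<And>F1 G1 F2 G2. F1 \<in> flat_graphs k \<Longrightarrow> G1 \<in> flat_graphs k \<Longrightarrow>
               F2 \<in> flat_graphs k \<Longrightarrow> G2 \<in> flat_graphs k \<Longrightarrow>
               iso_noniso (glue F1 G1) (glue F2 G2) \<Longrightarrow> A F1 G1 = A F2 G2"
  shows "\<forall>F\<in>flat_graphs k. \<forall>G\<in>flat_graphs k.
           0 \<le> A F G \<and> A F G \<le> A (edgeless k) (edgeless k)"
proof (intro ballI)
  fix F G assume F: "F \<in> flat_graphs k" and G: "G \<in> flat_graphs k"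
  define H where "H = glue F G"
  have H: "H \<in> flat_graphs k" unfolding H_def using F G by (rule glue_flat_graphs)
  have "glue_invariant k A" unfolding glue_invariant_def using inv by blast
  then have diag: "A F G = A H H" and mixed: "A F G = A H (edgeless k)"
    using glue_invariant_entries F G unfolding H_def by blast+
  have "0 \<le> A H H"
    using psd_on_diag_nonneg[OF psd finite_flat_graphs H] .
  moreover have "2 * A H (edgeless k) \<le> A H H + A (edgeless k) (edgeless k)"
    using psd_on_two_point[OF psd finite_flat_graphs H edgeless_flat_graphs] .
  ultimately show "0 \<le> A F G \<and> A F G \<le> A (edgeless k) (edgeless k)"
    using diag mixed by linarith
qed

end
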